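(* For all $a,b\in\mathbb{C}$ and every $c\in\mathbb{C}\setminus\{0\}$, the following identity of formal power series in $x$ holds: $$\bigl(M(1;a;b;x)\bigr)^{c}=M\!\left(1;\tfrac{a}{c};\tfrac{b}{c};cx\right).$$
   Context: For $m,a,b\in\mathbb{C}$ the master series is the formal power series $M(m;a;b;x)=m+x+\sum_{\ell\ge 2}\frac{x^\ell}{\ell!}\prod_{\gamma=1}^{\ell-1}(m-a\gamma+b\ell)$; $M(m;a;b;cx)$ denotes this series with $x$ replaced by $cx$. For a formal power series $f$ with constant term $1$ and $c\in\mathbb{C}$, $f^{c}:=\exp(c\log f)$. *)

theory Defs
  imports "HOL-Computational_Algebra.Formal_Power_Series"
begin

definition master :: "complex \<Rightarrow> complex \<Rightarrow> complex \<Rightarrow> complex fps" where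
  "master m a b = Abs_fps (\<lambda>l. if l = 0 then m else if l = 1 then 1
      else (\<Prod>g=1..l-1. m - a * of_nat g + b * of_nat l) / of_nat (fact l))"

text \<open>Formal logarithm of a series with constant term 1: log f = log(1 + (f-1)),
  i.e. the series ln(1+y) = sum_{n>=1} (-1)^(n-1) y^n / n composed with y = f - 1.\<close>
definition fps_log :: "complex fps \<Rightarrow> complex fps" where
  "fps_log f = fps_ln 1 oo (f - 1)"

definition fps_expo :: "complex fps \<Rightarrow> complex fps" where
  "fps_expo g = fps_exp 1 oo g"

definition fps_cpow :: "complex fps \<Rightarrow> complex \<Rightarrow> complex fps" where
  "fps_cpow f c = fps_expo (fps_const c * fps_log f)"

end

theory Submission
  imports Defs "HOL-Computational_Algebra.Polynomial"
begin

unbundle fps_syntax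

(* Put A_n(c) = c (c + bn - a) (c + bn - 2a) ... (c + bn - (n-1)a) / n! and G_c = sum_n A_n(c) x^n.
   Then M(1;a;b;x) = G_1 and M(1;a/c;b/c;cx) = G_c. The A_n are of binomial type,
   A_n(c + d) = sum_k A_k(c) A_(n-k)(d), so G_(c+d) = G_c G_d and G_m = G_1^m = M(1;a;b;x)^m
   for every natural m. The n-th coefficients of both G_1^c and G_c are polynomials in c that
   agree at every natural number, hence everywhere.
   The binomial-type identity rests on the difference equation
   A_(n+1)(c) - A_(n+1)(c - a) = a A_n(c + b - a): by induction on n, the defect of the identity,
   a polynomial in c, is invariant under c |-> c - a and vanishes at 0, so it vanishes at all
   -ja and is zero when a \<noteq> 0; the case a = 0 follows by continuity in a. *)

lemma poly_eq_0_if_infinite_roots: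
  fixes p :: "'a::idom poly"
  assumes "infinite A" and "\<And>x. x \<in> A \<Longrightarrow> poly p x = 0"
  shows "p = 0"
proof (rule ccontr)
  assume "p \<noteq> 0"
  then have "finite {x. poly p x = 0}" by (rule poly_roots_finite)
  moreover have "A \<subseteq> {x. poly p x = 0}" using assms(2) by blast
  ultimately show False using assms(1) finite_subset by blast
qed

definition abel_coeff :: "'a::field_char_0 \<Rightarrow> 'a \<Rightarrow> nat \<Rightarrow> 'a \<Rightarrow> 'a" where
  "abel_coeff a b n c = (if n = 0 then 1
     else c * (\<Prod>g<n-1. c + b * of_nat n - a * of_nat (Suc g)) / fact n)"

lemma abel_coeff_0 [simp]: "abel_coeff a b 0 c = 1"
  by (simp add: abel_coeff_def)

lemma abel_coeff_at_0: "n > 0 \<Longrightarrow> abel_coeff a b n 0 = 0"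
  by (simp add: abel_coeff_def)

lemma abel_coeff_Suc_diff:
  "abel_coeff a b (Suc m) c - abel_coeff a b (Suc m) (c - a) = a * abel_coeff a b m (c + b - a)"
proof (cases m)
  case 0
  then show ?thesis by (simp add: abel_coeff_def)
next
  case (Suc k)
  define N :: 'a where "N = of_nat (Suc (Suc k))"
  define Q where "Q = (\<Prod>g<k. c + b * N - a * of_nat (Suc (Suc g)))"
  have "(\<Prod>g<Suc k. c + b * N - a * of_nat (Suc g)) = (c + b * N - a) * Q"
    unfolding Q_def by (subst prod.lessThan_Suc_shift) simp
  then have left: "abel_coeff a b (Suc m) c = c * ((c + b * N - a) * Q) / fact (Suc (Suc k))"
    unfolding abel_coeff_def N_def using Suc by simp
  have "(\<Prod>g<Suc k. (c - a) + b * N - a * of_nat (Suc g)) = Q * (c + b * N - a * N)"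
    unfolding Q_def N_def by (subst prod.lessThan_Suc) (simp add: algebra_simps)
  then have right: "abel_coeff a b (Suc m) (c - a) = (c - a) * (Q * (c + b * N - a * N)) / fact (Suc (Suc k))"
    unfolding abel_coeff_def N_def using Suc by simp
  have "(\<Prod>g<k. (c + b - a) + b * of_nat (Suc k) - a * of_nat (Suc g)) = Q"
    unfolding Q_def N_def by (intro prod.cong refl) (simp add: algebra_simps)
  then have shifted: "abel_coeff a b m (c + b - a) = (c + b - a) * Q / fact (Suc k)"
    unfolding abel_coeff_def using Suc by simp
  have "c * (c + b * N - a) - (c - a) * (c + b * N - a * N) = a * N * (c + b - a)"
    by (simp add: algebra_simps)
  moreover have "(fact (Suc (Suc k)) :: 'a) = N * fact (Suc k)"
    unfolding N_def by (simp del: of_nat_Suc)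
  moreover have "N \<noteq> 0"
    unfolding N_def by (simp del: of_nat_Suc)
  ultimately show ?thesis
    unfolding left right shifted by (simp add: field_simps del: of_nat_Suc fact_Suc)
qed

lemma abel_convolution_Suc_diff:
  "(\<Sum>k\<le>Suc m. abel_coeff a b k c * abel_coeff a b (Suc m - k) d)
     - (\<Sum>k\<le>Suc m. abel_coeff a b k (c - a) * abel_coeff a b (Suc m - k) d)
   = a * (\<Sum>k\<le>m. abel_coeff a b k (c + b - a) * abel_coeff a b (m - k) d)"
proof -
  have "(\<Sum>k\<le>Suc m. abel_coeff a b k c * abel_coeff a b (Suc m - k) d)
          - (\<Sum>k\<le>Suc m. abel_coeff a b k (c - a) * abel_coeff a b (Suc m - k) d)
      = (\<Sum>k\<le>Suc m. (abel_coeff a b k c - abel_coeff a b k (c - a)) * abel_coeff a b (Suc m - k) d)"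
    by (simp add: sum_subtractf algebra_simps)
  also have "\<dots> = (\<Sum>k\<le>m. (abel_coeff a b (Suc k) c - abel_coeff a b (Suc k) (c - a))
                              * abel_coeff a b (m - k) d)"
    by (subst sum.atMost_Suc_shift) simp
  also have "\<dots> = a * (\<Sum>k\<le>m. abel_coeff a b k (c + b - a) * abel_coeff a b (m - k) d)"
    by (simp add: abel_coeff_Suc_diff sum_distrib_left algebra_simps)
  finally show ?thesis .
qed

definition abel_poly :: "'a::field_char_0 \<Rightarrow> 'a \<Rightarrow> nat \<Rightarrow> 'a poly" where
  "abel_poly a b n = (if n = 0 then 1
     else smult (1 / fact n) ([:0, 1:] * (\<Prod>g<n-1. [:b * of_nat n - a * of_nat (Suc g), 1:])))"

lemma poly_abel_poly: "poly (abel_poly a b n) c = abel_coeff a b n c"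
  by (simp add: abel_poly_def abel_coeff_def poly_prod algebra_simps)

lemma abel_coeff_convolution_nonzero:
  assumes "a \<noteq> 0"
  shows "(\<Sum>k\<le>n. abel_coeff a b k c * abel_coeff a b (n - k) d) = abel_coeff a b n (c + d)"
proof (induction n arbitrary: c d)
  case 0
  then show ?case by simp
next
  case (Suc m)
  define defect where "defect z =
    (\<Sum>k\<le>Suc m. abel_coeff a b k z * abel_coeff a b (Suc m - k) d) - abel_coeff a b (Suc m) (z + d)"
    for z
  have shift: "defect z = defect (z - a)" for z
    using abel_convolution_Suc_diff[where m = m and c = z and d = d] Suc.IH[of "z + b - a" d]
      abel_coeff_Suc_diff[of a b m "z + d"]
    unfolding defect_def by (simp add: algebra_simps)
  have "defect 0 = 0"
    unfolding defect_def by (subst sum.atMost_Suc_shift) (simp add: abel_coeff_at_0)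
  then have roots: "defect (- (of_nat j * a)) = 0" for j :: nat
  proof (induction j)
    case (Suc j)
    have "- (of_nat (Suc j) * a) = - (of_nat j * a) - a" by (simp add: algebra_simps)
    then show ?case using Suc shift by metis
  qed simp
  define P where "P = (\<Sum>k\<le>Suc m. smult (abel_coeff a b (Suc m - k) d) (abel_poly a b k))
                      - pcompose (abel_poly a b (Suc m)) [:d, 1:]"
  have defect_poly: "defect z = poly P z" for z
    unfolding defect_def P_def by (simp add: poly_sum poly_abel_poly poly_pcompose algebra_simps)
  have "infinite (range (\<lambda>j::nat. - (of_nat j * a)))"
    by (rule range_inj_infinite) (simp add: inj_def assms)
  then have "P = 0"
    by (rule poly_eq_0_if_infinite_roots) (auto simp: roots defect_poly[symmetric])
  then have "defect c = 0" by (simp add: defect_poly)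
  then show ?case unfolding defect_def by simp
qed

lemma continuous_on_abel_coeff:
  "continuous_on UNIV (\<lambda>a::'a::real_normed_field. abel_coeff a b n c)"
  unfolding abel_coeff_def by (cases "n = 0") (auto intro!: continuous_intros)

lemma abel_coeff_convolution:
  fixes a :: "'a::real_normed_field"
  shows "(\<Sum>k\<le>n. abel_coeff a b k c * abel_coeff a b (n - k) d) = abel_coeff a b n (c + d)"
proof (cases "a = 0")
  case False
  then show ?thesis by (rule abel_coeff_convolution_nonzero)
next
  case True
  define defect where "defect t =
    (\<Sum>k\<le>n. abel_coeff t b k c * abel_coeff t b (n - k) d) - abel_coeff t b n (c + d)" for t
  have "continuous_on UNIV defect"
    unfolding defect_def by (intro continuous_intros continuous_on_abel_coeff)
  then have "(defect \<longlongrightarrow> defect 0) (at 0)"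
    by (simp add: continuous_on_def)
  moreover have "(defect \<longlongrightarrow> 0) (at 0)"
    by (rule tendsto_eventually, unfold eventually_at_filter, rule always_eventually)
       (simp add: defect_def abel_coeff_convolution_nonzero)
  ultimately have "defect 0 = 0"
    using tendsto_unique at_neq_bot by blast
  then show ?thesis using True unfolding defect_def by simp
qed

definition abel_fps :: "'a::field_char_0 \<Rightarrow> 'a \<Rightarrow> 'a \<Rightarrow> 'a fps" where
  "abel_fps a b c = Abs_fps (\<lambda>n. abel_coeff a b n c)"

lemma abel_fps_add:
  fixes a :: "'a::real_normed_field"
  shows "abel_fps a b c * abel_fps a b d = abel_fps a b (c + d)"
  by (rule fps_ext) (simp add: abel_fps_def fps_mult_nth atLeast0AtMost abel_coeff_convolution)

lemma abel_fps_0: "abel_fps a b 0 = 1"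
  by (rule fps_ext) (simp add: abel_fps_def abel_coeff_at_0)

lemma abel_fps_of_nat:
  fixes a :: "'a::real_normed_field"
  shows "abel_fps a b (of_nat m) = abel_fps a b 1 ^ m"
  by (induction m) (simp_all add: abel_fps_0 abel_fps_add[symmetric] add.commute mult.commute)

lemma fps_log_nth_0: "F $ 0 = 1 \<Longrightarrow> fps_log F $ 0 = 0"
  by (simp add: fps_log_def)

lemma fps_exp_compose_fps_log:
  assumes "F $ 0 = 1"
  shows "fps_exp 1 oo fps_log F = F"
proof -
  have "(fps_exp 1 - 1) oo fps_ln 1 = (fps_X :: complex fps)"
    using fps_inv_fps_exp_compose(2)[of "1::complex"] fps_ln_fps_exp_inv[of "1::complex"] by simp
  then have exp_ln: "fps_exp 1 oo fps_ln 1 = fps_X + (1 :: complex fps)"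
    by (simp add: fps_compose_sub_distrib algebra_simps)
  have "fps_exp 1 oo fps_log F = (fps_exp 1 oo fps_ln 1) oo (F - 1)"
    unfolding fps_log_def using assms by (subst fps_compose_assoc) simp_all
  also have "\<dots> = F"
    unfolding exp_ln using assms by (simp add: fps_compose_add_distrib)
  finally show ?thesis .
qed

lemma fps_cpow_of_nat:
  assumes "F $ 0 = 1"
  shows "fps_cpow F (of_nat m) = F ^ m"
proof -
  define L where "L = fps_log F"
  have L0: "L $ 0 = 0" using assms by (simp add: L_def fps_log_nth_0)
  have "fps_cpow F (of_nat m) = fps_exp 1 oo ((fps_const (of_nat m) * fps_X) oo L)"
    using L0 by (simp add: fps_cpow_def fps_expo_def L_def fps_compose_mult_distrib)
  also have "\<dots> = (fps_exp 1 oo (fps_const (of_nat m) * fps_X)) oo L"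
    using L0 by (subst fps_compose_assoc) simp_all
  also have "\<dots> = (fps_exp 1 oo L) ^ m"
    using L0 by (simp add: fps_exp_power_mult fps_compose_power)
  also have "\<dots> = F ^ m"
    using fps_exp_compose_fps_log[OF assms] by (simp add: L_def)
  finally show ?thesis .
qed

lemma fps_cpow_nth_poly:
  "fps_cpow F c $ n = poly (\<Sum>i=0..n. monom (fps_log F ^ i $ n / fact i) i) c"
proof -
  have "(fps_const c * fps_log F) ^ i $ n = c ^ i * (fps_log F ^ i $ n)" for i
    by (simp add: power_mult_distrib fps_const_power)
  then show ?thesis
    by (simp add: fps_cpow_def fps_expo_def fps_compose_nth poly_sum poly_monom algebra_simps)
qed

lemma fps_cpow_abel_fps: "fps_cpow (abel_fps a b 1) c = abel_fps a b c"
proof (rule fps_ext)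
  fix n
  define F where "F = abel_fps a b 1"
  define p where "p = (\<Sum>i=0..n. monom (fps_log F ^ i $ n / fact i) i) - abel_poly a b n"
  have "F $ 0 = 1" by (simp add: F_def abel_fps_def)
  then have "poly p (of_nat m) = 0" for m
    unfolding p_def F_def
    by (simp add: fps_cpow_nth_poly[symmetric] poly_abel_poly fps_cpow_of_nat abel_fps_of_nat[symmetric])
       (simp add: abel_fps_def)
  then have "p = 0"
    using poly_eq_0_if_infinite_roots[OF range_inj_infinite[of "of_nat :: nat \<Rightarrow> complex"]]
    by (auto simp: inj_def)
  then show "fps_cpow (abel_fps a b 1) c $ n = abel_fps a b c $ n"
    using arg_cong[where f = "\<lambda>q. poly q c", OF \<open>p = 0\<close>]
    unfolding p_def F_def by (simp add: fps_cpow_nth_poly poly_abel_poly abel_fps_def)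
qed

lemma master_nth:
  "n \<noteq> 0 \<Longrightarrow> n \<noteq> 1 \<Longrightarrow>
     master m a b $ n = (\<Prod>g<n-1. m - a * of_nat (Suc g) + b * of_nat n) / fact n"
  unfolding master_def fps_nth_Abs_fps One_nat_def prod.atLeast1_atMost_eq
  by (simp only: if_False of_nat_fact)

lemma abel_fps_nth:
  "n \<noteq> 0 \<Longrightarrow> abel_fps a b c $ n = c * (\<Prod>g<n-1. c + b * of_nat n - a * of_nat (Suc g)) / fact n"
  unfolding abel_fps_def abel_coeff_def fps_nth_Abs_fps by (simp only: if_False)

lemma master_scaled_eq_abel_fps:
  assumes "c \<noteq> 0"
  shows "master 1 (a / c) (b / c) oo (fps_const c * fps_X) = abel_fps a b c"
proof (rule fps_ext)
  fix n :: nat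
  show "(master 1 (a / c) (b / c) oo (fps_const c * fps_X)) $ n = abel_fps a b c $ n"
  proof (cases "n = 0 \<or> n = 1")
    case True
    then show ?thesis by (auto simp add: master_def abel_fps_def abel_coeff_def)
  next
    case False
    then have n0: "n \<noteq> 0" "n \<noteq> 1" by auto
    then obtain k where n: "n = Suc (Suc k)" by (metis One_nat_def not0_implies_Suc)
    have "c ^ n * (\<Prod>g<n-1. 1 - a / c * of_nat (Suc g) + b / c * of_nat n)
        = c * (\<Prod>g<n-1. c * (1 - a / c * of_nat (Suc g) + b / c * of_nat n))"
      using n by (simp add: prod.distrib)
    also have "\<dots> = c * (\<Prod>g<n-1. c + b * of_nat n - a * of_nat (Suc g))"
      using assms by (intro arg_cong[where f = "(*) c"] prod.cong refl) (simp add: field_simps)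
    finally show ?thesis
      unfolding fps_nth_compose_linear master_nth[OF n0] abel_fps_nth[OF n0(1)]
      by (simp only: times_divide_eq_right)
  qed
qed

theorem mainTheorem5:
  fixes a b c :: complex
  assumes "c \<noteq> 0"
  shows "fps_cpow (master 1 a b) c = master 1 (a / c) (b / c) oo (fps_const c * fps_X)"
proof -
  have "master 1 a b = abel_fps a b 1"
    using master_scaled_eq_abel_fps[of 1 a b] by simp
  then show ?thesis
    using fps_cpow_abel_fps master_scaled_eq_abel_fps[OF assms] by simp
qed

end
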